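(* Let $w\in\mathbb{R}^n$ be a strictly positive vector and $\mu>0$, and define $f_i^*=\min\{1,\mu/w_i\}$ for $i\in[n]$. Then for any matrix $A\in\mathbb{R}^{n\times n}$, $$\sup_{f\in\mathbb{R}^n:\ \|f\|_{w,1}\le\mu,\ \|f\|_1\le1}\left\{f^\top Af\right\}\le4\sup_{i,j\in[n]}\left\{f_i^*|A_{ij}|f_j^*\right\}.$$
   Context: $\|f\|_{w,1}=\sum_i w_i|f_i|$ denotes the weighted $\ell_1$-norm and $\|f\|_1=\sum_i|f_i|$. *)

theory Defs
  imports "HOL-Analysis.Analysis"
begin

definition wl1_norm :: "real ^ 'n \<Rightarrow> real ^ 'n \<Rightarrow> real" where
  "wl1_norm w f = (\<Sum>i\<in>UNIV. w $ i * \<bar>f $ i\<bar>)"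

definition l1_norm :: "real ^ 'n \<Rightarrow> real" where
  "l1_norm f = (\<Sum>i\<in>UNIV. \<bar>f $ i\<bar>)"

end

theory Submission
  imports Defs
begin

text \<open>Put \<open>g\<^sub>i = \<bar>f\<^sub>i\<bar> / f\<^sup>*\<^sub>i\<close>. Each term \<open>f\<^sub>i A\<^sub>i\<^sub>j f\<^sub>j\<close> is at most
  \<open>g\<^sub>i g\<^sub>j \<cdot> f\<^sup>*\<^sub>i \<bar>A\<^sub>i\<^sub>j\<bar> f\<^sup>*\<^sub>j\<close>, so the quadratic form is at most \<open>M (\<Sum>\<^sub>i g\<^sub>i)\<^sup>2\<close>, where \<open>M\<close>
  is the supremum on the right. Since \<open>1 / f\<^sup>*\<^sub>i = max 1 (w\<^sub>i / \<mu>) \<le> 1 + w\<^sub>i / \<mu>\<close>, the two norm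
  constraints give \<open>\<Sum>\<^sub>i g\<^sub>i \<le> \<parallel>f\<parallel>\<^sub>1 + \<parallel>f\<parallel>\<^sub>w\<^sub>,\<^sub>1 / \<mu> \<le> 2\<close>.\<close>

lemma quadratic_form_le_rescaled_entry_bound:
  fixes A :: "real ^ 'n ^ 'n" and f s :: "real ^ 'n"
  assumes s_pos: "\<And>i. s $ i > 0"
    and entry_le: "\<And>i j. s $ i * \<bar>A $ i $ j\<bar> * s $ j \<le> M"
  shows "f \<bullet> (A *v f) \<le> M * (\<Sum>i\<in>UNIV. \<bar>f $ i\<bar> / s $ i)\<^sup>2"
proof -
  define g where "g i = \<bar>f $ i\<bar> / s $ i" for i
  have term_le: "f $ i * (A $ i $ j * f $ j) \<le> M * (g i * g j)" for i j
  proof -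
    have "f $ i * (A $ i $ j * f $ j) \<le> \<bar>f $ i\<bar> * \<bar>A $ i $ j\<bar> * \<bar>f $ j\<bar>"
      by (metis abs_ge_self abs_mult mult.assoc)
    also have "\<dots> = (g i * g j) * (s $ i * \<bar>A $ i $ j\<bar> * s $ j)"
      unfolding g_def using s_pos[of i] s_pos[of j] by (simp add: field_simps)
    also have "\<dots> \<le> (g i * g j) * M"
      using s_pos[of i] s_pos[of j] by (intro mult_left_mono entry_le) (simp add: g_def)
    finally show ?thesis by (simp add: mult.commute)
  qed
  have "f \<bullet> (A *v f) = (\<Sum>i\<in>UNIV. \<Sum>j\<in>UNIV. f $ i * (A $ i $ j * f $ j))"
    by (simp add: inner_vec_def matrix_vector_mult_def sum_distrib_left)
  also have "\<dots> \<le> (\<Sum>i\<in>UNIV. \<Sum>j\<in>UNIV. M * (g i * g j))"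
    by (intro sum_mono term_le)
  also have "\<dots> = M * (\<Sum>i\<in>UNIV. g i)\<^sup>2"
    by (simp add: power2_eq_square sum_distrib_left sum_distrib_right mult.assoc mult.commute)
  finally show ?thesis unfolding g_def .
qed

lemma sum_abs_div_min_one_le:
  fixes w f :: "real ^ 'n" and \<mu> :: real
  assumes w_pos: "\<And>i. w $ i > 0" and mu_pos: "\<mu> > 0"
  shows "(\<Sum>i\<in>UNIV. \<bar>f $ i\<bar> / min 1 (\<mu> / w $ i)) \<le> l1_norm f + wl1_norm w f / \<mu>"
proof -
  have "\<bar>f $ i\<bar> / min 1 (\<mu> / w $ i) \<le> \<bar>f $ i\<bar> + w $ i * \<bar>f $ i\<bar> / \<mu>" for i
  proof (cases "1 \<le> \<mu> / w $ i")
    case True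
    then show ?thesis
      using w_pos[of i] mu_pos by simp
  next
    case False
    then have "\<bar>f $ i\<bar> / min 1 (\<mu> / w $ i) = w $ i * \<bar>f $ i\<bar> / \<mu>"
      using w_pos[of i] mu_pos by simp
    then show ?thesis
      by simp
  qed
  then have "(\<Sum>i\<in>UNIV. \<bar>f $ i\<bar> / min 1 (\<mu> / w $ i))
               \<le> (\<Sum>i\<in>UNIV. \<bar>f $ i\<bar> + w $ i * \<bar>f $ i\<bar> / \<mu>)"
    by (rule sum_mono)
  also have "\<dots> = l1_norm f + wl1_norm w f / \<mu>"
    unfolding l1_norm_def wl1_norm_def by (simp add: sum.distrib sum_divide_distrib)
  finally show ?thesis .
qed

theorem lemma4:
  fixes w :: "real ^ 'n" and \<mu> :: real and A :: "real ^ 'n ^ 'n"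
  assumes w_pos: "\<forall>i. w $ i > 0"
    and mu_pos: "\<mu> > 0"
  defines "fstar \<equiv> (\<lambda>i. min 1 (\<mu> / w $ i))"
  shows "(SUP f \<in> {f :: real ^ 'n. wl1_norm w f \<le> \<mu> \<and> l1_norm f \<le> 1}. f \<bullet> (A *v f))
           \<le> 4 * (SUP ij \<in> (UNIV :: ('n \<times> 'n) set).
                     fstar (fst ij) * \<bar>A $ fst ij $ snd ij\<bar> * fstar (snd ij))"
proof -
  define M where "M = (SUP ij \<in> (UNIV :: ('n \<times> 'n) set).
                     fstar (fst ij) * \<bar>A $ fst ij $ snd ij\<bar> * fstar (snd ij))"
  define s where "s = (\<chi> i. fstar i)"
  have s_pos: "s $ i > 0" for i
    using w_pos mu_pos unfolding s_def fstar_def by auto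
  have entry_le: "s $ i * \<bar>A $ i $ j\<bar> * s $ j \<le> M" for i j
    unfolding M_def s_def by (rule cSUP_upper2[where x="(i, j)"]) auto
  have M_nonneg: "0 \<le> M"
    using entry_le[of undefined undefined] s_pos
    by (meson mult_nonneg_nonneg abs_ge_zero less_imp_le order_trans)
  have "f \<bullet> (A *v f) \<le> 4 * M" if "wl1_norm w f \<le> \<mu>" "l1_norm f \<le> 1" for f
  proof -
    have "(\<Sum>i\<in>UNIV. \<bar>f $ i\<bar> / s $ i) \<le> l1_norm f + wl1_norm w f / \<mu>"
      using sum_abs_div_min_one_le[of w \<mu> f] w_pos mu_pos by (simp add: s_def fstar_def)
    also have "\<dots> \<le> 2"
      using that mu_pos divide_le_eq_1_pos[of \<mu> "wl1_norm w f"] by linarith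
    finally have "(\<Sum>i\<in>UNIV. \<bar>f $ i\<bar> / s $ i)\<^sup>2 \<le> 2\<^sup>2"
      by (intro power_mono sum_nonneg divide_nonneg_pos abs_ge_zero s_pos)
    then have "M * (\<Sum>i\<in>UNIV. \<bar>f $ i\<bar> / s $ i)\<^sup>2 \<le> 4 * M"
      using mult_left_mono[OF _ M_nonneg] by fastforce
    with quadratic_form_le_rescaled_entry_bound[OF s_pos entry_le, of f] show ?thesis
      by linarith
  qed
  moreover have "(0 :: real ^ 'n) \<in> {f. wl1_norm w f \<le> \<mu> \<and> l1_norm f \<le> 1}"
    using mu_pos by (simp add: wl1_norm_def l1_norm_def)
  ultimately show ?thesis
    unfolding M_def[symmetric] by (intro cSUP_least) auto
qed

end
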